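(* Let $G$ be a finite group and $C$ a conjugacy class of $G$, $C\ne\{1\}$, whose elements generate $G$. Then the power series $\chi_{(G,C)}(t)=\sum_{k\ge0}h_kt^k$ is a rational function of $t$, where $h_k$ is the number of elements $s\in S(G,C)^G_{\mathbf 1}$ of length $k$.
   Context: The factorization semigroup $S(G,C)$ is generated by symbols $x_g$, $g\in C$, subject to $x_{g_1}x_{g_2}=x_{g_2}x_{g_2^{-1}g_1g_2}=x_{g_1g_2g_1^{-1}}x_{g_1}$ ($g_1,g_2\in C$); $\alpha_G:S(G,C)\to G$, $x_g\mapsto g$. The length of $s$ is the number of factors in any expression of $s$ as a product of the $x_g$. For $s=x_{g_1}\cdots x_{g_n}$, $G_s$ is the subgroup generated by $g_1,\dots,g_n$ (well defined). $S(G,C)^G_{\mathbf 1}=\{s: G_s=G,\ \alpha_G(s)=1\}$. *)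

theory Defs
  imports "HOL-Algebra.Algebra" "HOL-Computational_Algebra.Polynomial_FPS"
begin

definition word_prod :: "('a, 'b) monoid_scheme \<Rightarrow> 'a list \<Rightarrow> 'a" where
  "word_prod G w = foldr (\<lambda>x y. x \<otimes>\<^bsub>G\<^esub> y) w \<one>\<^bsub>G\<^esub>"

definition fact_step :: "('a, 'b) monoid_scheme \<Rightarrow> 'a set \<Rightarrow> ('a list \<times> 'a list) set" where
  "fact_step G C =
     {(u @ [g1, g2] @ v, u @ [g2, inv\<^bsub>G\<^esub> g2 \<otimes>\<^bsub>G\<^esub> g1 \<otimes>\<^bsub>G\<^esub> g2] @ v) | u v g1 g2. g1 \<in> C \<and> g2 \<in> C}
   \<union> {(u @ [g1, g2] @ v, u @ [g1 \<otimes>\<^bsub>G\<^esub> g2 \<otimes>\<^bsub>G\<^esub> inv\<^bsub>G\<^esub> g1, g1] @ v) | u v g1 g2. g1 \<in> C \<and> g2 \<in> C}"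

text \<open>The congruence defining S(G,C): words in C are identified iff they are connected
  by a finite chain of applications of the relations (in either direction).\<close>
definition fact_equiv :: "('a, 'b) monoid_scheme \<Rightarrow> 'a set \<Rightarrow> ('a list \<times> 'a list) set" where
  "fact_equiv G C = (fact_step G C \<union> (fact_step G C)\<inverse>)\<^sup>*"

text \<open>Words of length k representing elements s of S(G,C) with G_s = G and alpha(s) = 1.\<close>
definition words_G_one :: "('a, 'b) monoid_scheme \<Rightarrow> 'a set \<Rightarrow> nat \<Rightarrow> 'a list set" where
  "words_G_one G C k = {w. length w = k \<and> set w \<subseteq> C \<and> word_prod G w = \<one>\<^bsub>G\<^esub>
                           \<and> generate G (set w) = carrier G}"

definition h_count :: "('a, 'b) monoid_scheme \<Rightarrow> 'a set \<Rightarrow> nat \<Rightarrow> nat" where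
  "h_count G C k = card (words_G_one G C k // fact_equiv G C)"

definition conj_class :: "('a, 'b) monoid_scheme \<Rightarrow> 'a \<Rightarrow> 'a set" where
  "conj_class G c = {g \<otimes>\<^bsub>G\<^esub> c \<otimes>\<^bsub>G\<^esub> inv\<^bsub>G\<^esub> g | g. g \<in> carrier G}"

definition rational_fps :: "'k::field fps \<Rightarrow> bool" where
  "rational_fps F \<longleftrightarrow> (\<exists>p q :: 'k poly. q \<noteq> 0 \<and> fps_of_poly q * F = fps_of_poly p)"

end

theory Submission
  imports Defs "HOL-Algebra.Multiplicative_Group"
begin

text \<open>Let \<open>d = |G|\<close>, so \<open>x\<^sup>d = 1\<close> for all \<open>x\<close>. A word of length \<open>k + d\<close> with
  \<open>k \<ge> |C| d\<close> contains some letter \<open>b\<close> more than \<open>d\<close> times. Moving these occurrences to the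
  front (conjugating the letters they pass) shows that it is equivalent to \<open>b\<^sup>d w\<close>, where \<open>w\<close>
  again has product \<open>1\<close> and generates \<open>G\<close>. As \<open>w\<close> generates \<open>G\<close>, the block \<open>b\<^sup>d\<close> can be
  replaced by \<open>a\<^sup>d\<close> for a fixed \<open>a \<in> C\<close> (Kulikov's argument), so \<open>s \<mapsto> x\<^sub>a\<^sup>d s\<close> maps the
  elements of length \<open>k\<close> onto those of length \<open>k + d\<close>. Hence \<open>h (k + d) \<le> h k\<close> for large \<open>k\<close>,
  the sequence \<open>h\<close> is eventually periodic, and \<open>(1 - t\<^sup>d) \<chi>(t)\<close> is a polynomial.\<close>

lemma word_prod_Nil [simp]: "word_prod G [] = \<one>\<^bsub>G\<^esub>"
  by (simp add: word_prod_def)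

lemma word_prod_Cons [simp]: "word_prod G (x # w) = x \<otimes>\<^bsub>G\<^esub> word_prod G w"
  by (simp add: word_prod_def)

lemma (in monoid) word_prod_closed: "set w \<subseteq> carrier G \<Longrightarrow> word_prod G w \<in> carrier G"
  by (induction w) auto

lemma (in monoid) word_prod_append:
  "set u \<subseteq> carrier G \<Longrightarrow> set r \<subseteq> carrier G \<Longrightarrow>
   word_prod G (u @ r) = word_prod G u \<otimes> word_prod G r"
  by (induction u) (auto simp: word_prod_closed m_assoc)

lemma (in monoid) word_prod_replicate: "x \<in> carrier G \<Longrightarrow> word_prod G (replicate n x) = x [^] n"
  by (induction n) (auto simp: nat_pow_Suc2[symmetric])

lemma (in group) generate_eqI:
  assumes "A \<subseteq> carrier G" "B \<subseteq> carrier G" "A \<subseteq> generate G B" "B \<subseteq> generate G A"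
  shows "generate G A = generate G B"
  using assms generate_subgroup_incl generate_is_subgroup by (metis subset_antisym)

lemma (in group) generate_Un_cong:
  assumes "A \<subseteq> carrier G" "S \<subseteq> carrier G" "T \<subseteq> carrier G" "generate G S = generate G T"
  shows "generate G (A \<union> S) = generate G (A \<union> T)"
proof (rule generate_eqI)
  have "S \<subseteq> generate G (A \<union> T)" "T \<subseteq> generate G (A \<union> S)"
    using generate.incl[of _ S G] generate.incl[of _ T G] assms(4)
      mono_generate[of S "A \<union> S"] mono_generate[of T "A \<union> T"] by auto
  then show "A \<union> S \<subseteq> generate G (A \<union> T)" "A \<union> T \<subseteq> generate G (A \<union> S)"
    by (auto intro: generate.incl)
qed (use assms in auto)

lemma (in group) generate_pair_conj:
  assumes "a \<in> carrier G" "b \<in> carrier G"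
  shows "generate G {a, b} = generate G {a, a \<otimes> b \<otimes> inv a}"
proof (rule generate_eqI)
  have "b = inv a \<otimes> (a \<otimes> b \<otimes> inv a) \<otimes> a"
    using assms by (simp add: m_assoc) (simp add: m_assoc[symmetric])
  also have "\<dots> \<in> generate G {a, a \<otimes> b \<otimes> inv a}"
    by (intro generate.eng generate.inv generate.incl) auto
  finally show "{a, b} \<subseteq> generate G {a, a \<otimes> b \<otimes> inv a}"
    by (auto intro: generate.incl)
  show "{a, a \<otimes> b \<otimes> inv a} \<subseteq> generate G {a, b}"
    by (auto intro: generate.eng generate.inv generate.incl)
qed (use assms in auto)

lemma (in group) replace_pair_invariants:
  assumes "set (u @ r) \<subseteq> carrier G" "{g1, g2, g1', g2'} \<subseteq> carrier G"
    and "g1 \<otimes> g2 = g1' \<otimes> g2'" "generate G {g1, g2} = generate G {g1', g2'}"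
  shows "word_prod G (u @ [g1', g2'] @ r) = word_prod G (u @ [g1, g2] @ r)"
    and "generate G (set (u @ [g1', g2'] @ r)) = generate G (set (u @ [g1, g2] @ r))"
proof -
  have "g1 \<otimes> (g2 \<otimes> word_prod G r) = g1' \<otimes> (g2' \<otimes> word_prod G r)"
    using assms by (simp add: word_prod_closed m_assoc[symmetric])
  then show "word_prod G (u @ [g1', g2'] @ r) = word_prod G (u @ [g1, g2] @ r)"
    using assms by (simp add: word_prod_append word_prod_closed)
  have "generate G (set (u @ r) \<union> {g1', g2'}) = generate G (set (u @ r) \<union> {g1, g2})"
    by (rule generate_Un_cong) (use assms in auto)
  moreover have "set (u @ [x, y] @ r) = set (u @ r) \<union> {x, y}" for x y
    by auto
  ultimately show "generate G (set (u @ [g1', g2'] @ r)) = generate G (set (u @ [g1, g2] @ r))"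
    by simp
qed

lemma fact_step_conj_rightI:
  "g1 \<in> C \<Longrightarrow> g2 \<in> C \<Longrightarrow>
   (u @ [g1, g2] @ r, u @ [g2, inv\<^bsub>G\<^esub> g2 \<otimes>\<^bsub>G\<^esub> g1 \<otimes>\<^bsub>G\<^esub> g2] @ r) \<in> fact_step G C"
  unfolding fact_step_def by blast

lemma fact_step_conj_leftI:
  "g1 \<in> C \<Longrightarrow> g2 \<in> C \<Longrightarrow>
   (u @ [g1, g2] @ r, u @ [g1 \<otimes>\<^bsub>G\<^esub> g2 \<otimes>\<^bsub>G\<^esub> inv\<^bsub>G\<^esub> g1, g1] @ r) \<in> fact_step G C"
  unfolding fact_step_def by blast

lemma fact_stepE:
  assumes "(x, y) \<in> fact_step G C"
  obtains (conj_right) u r g1 g2 where "g1 \<in> C" "g2 \<in> C"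
      "x = u @ [g1, g2] @ r" "y = u @ [g2, inv\<^bsub>G\<^esub> g2 \<otimes>\<^bsub>G\<^esub> g1 \<otimes>\<^bsub>G\<^esub> g2] @ r"
    | (conj_left) u r g1 g2 where "g1 \<in> C" "g2 \<in> C"
      "x = u @ [g1, g2] @ r" "y = u @ [g1 \<otimes>\<^bsub>G\<^esub> g2 \<otimes>\<^bsub>G\<^esub> inv\<^bsub>G\<^esub> g1, g1] @ r"
  using assms unfolding fact_step_def by blast

lemma fact_step_append:
  assumes "(x, y) \<in> fact_step G C"
  shows "(p @ x @ q, p @ y @ q) \<in> fact_step G C"
  using assms
proof (cases rule: fact_stepE)
  case (conj_right u r g1 g2)
  then show ?thesis using fact_step_conj_rightI[of g1 C g2 "p @ u" "r @ q" G] by simp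
next
  case (conj_left u r g1 g2)
  then show ?thesis using fact_step_conj_leftI[of g1 C g2 "p @ u" "r @ q" G] by simp
qed

lemma equiv_fact_equiv: "equiv UNIV (fact_equiv G C)"
  unfolding fact_equiv_def
  by (intro equivI refl_rtrancl sym_rtrancl sym_Un_converse trans_rtrancl) auto

lemma fact_equiv_refl [simp]: "(w, w) \<in> fact_equiv G C"
  using equiv_fact_equiv by (blast dest: equiv_class_self)

lemma fact_equiv_sym: "(x, y) \<in> fact_equiv G C \<Longrightarrow> (y, x) \<in> fact_equiv G C"
  using equiv_fact_equiv by (meson equivE symD)

lemma fact_equiv_trans [trans]:
  "(x, y) \<in> fact_equiv G C \<Longrightarrow> (y, z) \<in> fact_equiv G C \<Longrightarrow> (x, z) \<in> fact_equiv G C"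
  using equiv_fact_equiv by (meson equivE transD)

lemma fact_equiv_append:
  assumes "(x, y) \<in> fact_equiv G C"
  shows "(p @ x @ q, p @ y @ q) \<in> fact_equiv G C"
  using assms unfolding fact_equiv_def
proof (induction rule: rtrancl_induct)
  case (step y z)
  then show ?case by (auto intro: rtrancl_into_rtrancl fact_step_append)
qed simp

lemma fact_equiv_Cons: "(x, y) \<in> fact_equiv G C \<Longrightarrow> (p # x, p # y) \<in> fact_equiv G C"
  using fact_equiv_append[of x y G C "[p]" "[]"] by simp

lemma fact_equiv_append_left: "(x, y) \<in> fact_equiv G C \<Longrightarrow> (p @ x, p @ y) \<in> fact_equiv G C"
  using fact_equiv_append[of x y G C p "[]"] by simp

lemma fact_equiv_append_right: "(x, y) \<in> fact_equiv G C \<Longrightarrow> (x @ q, y @ q) \<in> fact_equiv G C"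
  using fact_equiv_append[of x y G C "[]" q] by simp

lemma fact_equiv_conj_right:
  "g1 \<in> C \<Longrightarrow> g2 \<in> C \<Longrightarrow> (g1 # g2 # w, g2 # (inv\<^bsub>G\<^esub> g2 \<otimes>\<^bsub>G\<^esub> g1 \<otimes>\<^bsub>G\<^esub> g2) # w) \<in> fact_equiv G C"
  using fact_step_conj_rightI[of g1 C g2 "[]" w G] unfolding fact_equiv_def by auto

lemma fact_equiv_conj_left:
  "g1 \<in> C \<Longrightarrow> g2 \<in> C \<Longrightarrow> (g1 # g2 # w, (g1 \<otimes>\<^bsub>G\<^esub> g2 \<otimes>\<^bsub>G\<^esub> inv\<^bsub>G\<^esub> g1) # g1 # w) \<in> fact_equiv G C"
  using fact_step_conj_leftI[of g1 C g2 "[]" w G] unfolding fact_equiv_def by auto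

lemma count_list_pigeonhole:
  assumes "finite A" "set xs \<subseteq> A" "card A * n < length xs"
  obtains x where "x \<in> A" "n < count_list xs x"
proof -
  have "\<not> (\<forall>x\<in>A. count_list xs x \<le> n)"
  proof
    assume "\<forall>x\<in>A. count_list xs x \<le> n"
    then have "length xs \<le> card A * n"
      using sum_count_set[OF assms(2,1)] sum_bounded_above[of A "count_list xs" n] by simp
    with assms(3) show False by simp
  qed
  then show ?thesis using that by (meson not_le)
qed

lemma card_quotient_le_if_onto:
  assumes "equiv UNIV r" "finite A"
    and respects: "\<And>x y. (x, y) \<in> r \<Longrightarrow> (f x, f y) \<in> r"
    and onto: "\<And>y. y \<in> B \<Longrightarrow> \<exists>x\<in>A. (y, f x) \<in> r"
  shows "card (B // r) \<le> card (A // r)"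
proof -
  define F where "F Z = r `` (f ` Z)" for Z
  have F_class: "F (r `` {x}) = r `` {f x}" for x
  proof
    show "F (r `` {x}) \<subseteq> r `` {f x}"
      unfolding F_def using respects assms(1) by (blast dest: equivE transD)
    show "r `` {f x} \<subseteq> F (r `` {x})"
      unfolding F_def using assms(1) by (blast dest: equiv_class_self)
  qed
  have "B // r \<subseteq> F ` (A // r)"
  proof
    fix Y assume "Y \<in> B // r"
    then obtain y where "y \<in> B" "Y = r `` {y}" by (auto elim: quotientE)
    moreover from onto[OF \<open>y \<in> B\<close>] obtain x where "x \<in> A" "(y, f x) \<in> r" by blast
    ultimately have "Y = F (r `` {x})"
      using F_class equiv_class_eq[OF assms(1)] by simp
    then show "Y \<in> F ` (A // r)" using \<open>x \<in> A\<close> by (auto intro: quotientI)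
  qed
  moreover have "finite (A // r)"
    using assms(2) unfolding quotient_def by simp
  ultimately have "card (B // r) \<le> card (F ` (A // r))"
    by (intro card_mono finite_imageI)
  also have "\<dots> \<le> card (A // r)"
    using \<open>finite (A // r)\<close> by (rule card_image_le)
  finally show ?thesis .
qed

lemma conj_class_memberE:
  assumes "x \<in> conj_class G c"
  obtains h where "h \<in> carrier G" "x = h \<otimes>\<^bsub>G\<^esub> c \<otimes>\<^bsub>G\<^esub> inv\<^bsub>G\<^esub> h"
  using assms by (auto simp: conj_class_def)

lemma (in group) conj_class_self: "c \<in> carrier G \<Longrightarrow> c \<in> conj_class G c"
  unfolding conj_class_def by (intro CollectI exI[of _ \<one>] conjI) simp_all

locale conj_invariant_subset = group G for G (structure) +
  fixes C :: "'a set"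
  assumes C_subset: "C \<subseteq> carrier G"
    and conj_closed: "\<lbrakk>g \<in> carrier G; c \<in> C\<rbrakk> \<Longrightarrow> g \<otimes> c \<otimes> inv g \<in> C"
begin

abbreviation fact_equivalent :: "'a list \<Rightarrow> 'a list \<Rightarrow> bool"  (infix "\<approx>\<^sub>C" 50)
  where "x \<approx>\<^sub>C y \<equiv> (x, y) \<in> fact_equiv G C"

lemma C_carrier [simp]: "c \<in> C \<Longrightarrow> c \<in> carrier G"
  using C_subset by auto

lemma conj_closed_inv: "g \<in> C \<Longrightarrow> c \<in> C \<Longrightarrow> inv g \<otimes> c \<otimes> g \<in> C"
  using conj_closed[of "inv g" c] by simp

lemma fact_step_subset_C:
  assumes "(x, y) \<in> fact_step G C"
  shows "set x \<subseteq> C \<longleftrightarrow> set y \<subseteq> C"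
  using assms by (cases rule: fact_stepE) (auto intro: conj_closed conj_closed_inv)

lemma fact_step_invariants:
  assumes "(x, y) \<in> fact_step G C" "set x \<subseteq> C"
  shows "length y = length x \<and> word_prod G y = word_prod G x \<and> generate G (set y) = generate G (set x)"
  using assms(1)
proof (cases rule: fact_stepE)
  case (conj_right u w g1 g2)
  have "g2 \<otimes> (inv g2 \<otimes> g1 \<otimes> g2) \<otimes> inv g2 = g1"
    using conj_right by (simp add: m_assoc) (simp add: m_assoc[symmetric])
  then have "generate G {g1, g2} = generate G {g2, inv g2 \<otimes> g1 \<otimes> g2}"
    using generate_pair_conj[of g2 "inv g2 \<otimes> g1 \<otimes> g2"] conj_right by (simp add: insert_commute)
  moreover have "g1 \<otimes> g2 = g2 \<otimes> (inv g2 \<otimes> g1 \<otimes> g2)"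
    using conj_right by (simp add: m_assoc[symmetric])
  moreover have "set (u @ w) \<subseteq> carrier G" "{g1, g2, g2, inv g2 \<otimes> g1 \<otimes> g2} \<subseteq> carrier G"
    using conj_right assms(2) C_subset by auto
  ultimately show ?thesis
    using replace_pair_invariants conj_right by simp
next
  case (conj_left u w g1 g2)
  have "generate G {g1, g2} = generate G {g1 \<otimes> g2 \<otimes> inv g1, g1}"
    using generate_pair_conj[of g1 g2] conj_left by (simp add: insert_commute)
  moreover have "g1 \<otimes> g2 = g1 \<otimes> g2 \<otimes> inv g1 \<otimes> g1"
    using conj_left by (simp add: m_assoc)
  moreover have "set (u @ w) \<subseteq> carrier G" "{g1, g2, g1 \<otimes> g2 \<otimes> inv g1, g1} \<subseteq> carrier G"
    using conj_left assms(2) C_subset by auto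
  ultimately show ?thesis
    using replace_pair_invariants conj_left by simp
qed

lemma fact_equiv_invariants:
  assumes "x \<approx>\<^sub>C y" "set x \<subseteq> C"
  shows "set y \<subseteq> C \<and> length y = length x \<and> word_prod G y = word_prod G x
    \<and> generate G (set y) = generate G (set x)"
  using assms(1) unfolding fact_equiv_def
proof (induction rule: rtrancl_induct)
  case (step y z)
  then have "set y \<subseteq> C" by blast
  from step.hyps(2) show ?case
  proof
    assume "(y, z) \<in> fact_step G C"
    then show ?thesis
      using step.IH fact_step_subset_C fact_step_invariants \<open>set y \<subseteq> C\<close> by metis
  next
    assume "(y, z) \<in> (fact_step G C)\<inverse>"
    then have "(z, y) \<in> fact_step G C" by simp
    then show ?thesis
      using step.IH fact_step_subset_C fact_step_invariants \<open>set y \<subseteq> C\<close> by metis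
  qed
qed (use assms(2) in simp)

lemma fact_equiv_move_left:
  assumes "set u \<subseteq> C" "b \<in> C"
  shows "u @ [b] \<approx>\<^sub>C b # map (\<lambda>x. inv b \<otimes> x \<otimes> b) u"
  using assms(1)
proof (induction u)
  case (Cons c u)
  let ?conj = "map (\<lambda>x. inv b \<otimes> x \<otimes> b)"
  have "c # u @ [b] \<approx>\<^sub>C c # b # ?conj u"
    using Cons by (simp add: fact_equiv_Cons)
  also have "c # b # ?conj u \<approx>\<^sub>C b # (inv b \<otimes> c \<otimes> b) # ?conj u"
    using Cons.prems assms(2) by (simp add: fact_equiv_conj_right)
  finally show ?case by simp
qed simp

lemma fact_equiv_move_left_conj:
  assumes "set u \<subseteq> C" "c \<in> C"
  shows "u @ [c] \<approx>\<^sub>C (word_prod G u \<otimes> c \<otimes> inv (word_prod G u)) # u"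
  using assms(1)
proof (induction u)
  case (Cons x u)
  let ?c = "word_prod G u \<otimes> c \<otimes> inv (word_prod G u)"
  have u: "word_prod G u \<in> carrier G"
    using Cons.prems C_subset by (auto intro: word_prod_closed)
  have "x # u @ [c] \<approx>\<^sub>C x # ?c # u"
    using Cons by (simp add: fact_equiv_Cons)
  also have "x # ?c # u \<approx>\<^sub>C (x \<otimes> ?c \<otimes> inv x) # x # u"
    using Cons.prems assms(2) u by (simp add: fact_equiv_conj_left conj_closed)
  finally show ?case
    using Cons.prems u assms(2) by (simp add: m_assoc inv_mult_group)
qed (use assms(2) in simp)

lemma fact_equiv_replicate_commute:
  assumes "g \<in> C" "c \<in> C" "g [^] n = \<one>"
  shows "replicate n g @ [c] \<approx>\<^sub>C c # replicate n g"
  using fact_equiv_move_left_conj[of "replicate n g" c] assms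
  by (simp add: word_prod_replicate set_replicate_conv_if)

lemma fact_equiv_replicate_conj:
  assumes "g \<in> C" "c \<in> C" "g [^] n = \<one>"
  shows "replicate n (c \<otimes> g \<otimes> inv c) @ c # w \<approx>\<^sub>C replicate n g @ c # w"
proof -
  have "inv c \<otimes> (c \<otimes> g \<otimes> inv c) \<otimes> c = g"
    using assms by (simp add: m_assoc) (simp add: m_assoc[symmetric])
  then have "replicate n (c \<otimes> g \<otimes> inv c) @ [c] \<approx>\<^sub>C c # replicate n g"
    using fact_equiv_move_left[of "replicate n (c \<otimes> g \<otimes> inv c)" c] assms
    by (simp add: conj_closed set_replicate_conv_if)
  also have "c # replicate n g \<approx>\<^sub>C replicate n g @ [c]"
    using fact_equiv_replicate_commute[OF assms] by (rule fact_equiv_sym)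
  finally show ?thesis
    using fact_equiv_append_right by fastforce
qed

text \<open>Kulikov's argument: the conjugators allowed in front of \<open>s\<close> form a subgroup containing
  every letter of \<open>s\<close>, since a letter can be moved to the front of \<open>s\<close>.\<close>
definition block_stabilizer :: "nat \<Rightarrow> 'a list \<Rightarrow> 'a set" where
  "block_stabilizer n s =
     {h \<in> carrier G. \<forall>g\<in>C. replicate n (h \<otimes> g \<otimes> inv h) @ s \<approx>\<^sub>C replicate n g @ s}"

lemma subgroup_block_stabilizer: "subgroup (block_stabilizer n s) G"
proof (rule subgroupI)
  show "block_stabilizer n s \<subseteq> carrier G" "block_stabilizer n s \<noteq> {}"
    by (auto simp: block_stabilizer_def intro!: exI[of _ \<one>])
next
  fix h assume h: "h \<in> block_stabilizer n s"
  then have h_carrier: "h \<in> carrier G" by (simp add: block_stabilizer_def)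
  have "replicate n (inv h \<otimes> g \<otimes> h) @ s \<approx>\<^sub>C replicate n g @ s" if g: "g \<in> C" for g
  proof -
    have "h \<otimes> (inv h \<otimes> g \<otimes> h) \<otimes> inv h = g"
      using h_carrier g by (simp add: m_assoc) (simp add: m_assoc[symmetric])
    moreover have "inv h \<otimes> g \<otimes> h \<in> C"
      using conj_closed[of "inv h" g] h_carrier g by simp
    ultimately have "replicate n g @ s \<approx>\<^sub>C replicate n (inv h \<otimes> g \<otimes> h) @ s"
      using h unfolding block_stabilizer_def by force
    then show ?thesis by (rule fact_equiv_sym)
  qed
  then show "inv h \<in> block_stabilizer n s"
    using h_carrier by (simp add: block_stabilizer_def)
next
  fix h1 h2 assume h1: "h1 \<in> block_stabilizer n s" and h2: "h2 \<in> block_stabilizer n s"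
  then have carrier: "h1 \<in> carrier G" "h2 \<in> carrier G"
    by (simp_all add: block_stabilizer_def)
  have "replicate n (h1 \<otimes> h2 \<otimes> g \<otimes> inv (h1 \<otimes> h2)) @ s \<approx>\<^sub>C replicate n g @ s" if g: "g \<in> C" for g
  proof -
    have "h1 \<otimes> h2 \<otimes> g \<otimes> inv (h1 \<otimes> h2) = h1 \<otimes> (h2 \<otimes> g \<otimes> inv h2) \<otimes> inv h1"
      using carrier g by (simp add: m_assoc inv_mult_group)
    moreover have "h2 \<otimes> g \<otimes> inv h2 \<in> C"
      using conj_closed carrier g by simp
    ultimately have "replicate n (h1 \<otimes> h2 \<otimes> g \<otimes> inv (h1 \<otimes> h2)) @ s
        \<approx>\<^sub>C replicate n (h2 \<otimes> g \<otimes> inv h2) @ s"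
      using h1 unfolding block_stabilizer_def by simp
    also have "replicate n (h2 \<otimes> g \<otimes> inv h2) @ s \<approx>\<^sub>C replicate n g @ s"
      using h2 g unfolding block_stabilizer_def by simp
    finally show ?thesis .
  qed
  then show "h1 \<otimes> h2 \<in> block_stabilizer n s"
    using carrier by (simp add: block_stabilizer_def)
qed

lemma letter_in_block_stabilizer:
  assumes "set s \<subseteq> C" "c \<in> set s" and pow: "\<And>g. g \<in> C \<Longrightarrow> g [^] n = \<one>"
  shows "c \<in> block_stabilizer n s"
proof -
  obtain u w where s_split: "s = u @ c # w"
    using assms(2) by (meson split_list)
  define r where "r = map (\<lambda>x. inv c \<otimes> x \<otimes> c) u @ w"
  have c: "c \<in> C" and "set u \<subseteq> C"
    using assms(1) s_split by auto
  then have s_front: "s \<approx>\<^sub>C c # r"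
    using fact_equiv_append_right[OF fact_equiv_move_left, of u c w] s_split r_def by simp
  have "replicate n (c \<otimes> g \<otimes> inv c) @ s \<approx>\<^sub>C replicate n g @ s" if g: "g \<in> C" for g
  proof -
    have "replicate n (c \<otimes> g \<otimes> inv c) @ s \<approx>\<^sub>C replicate n (c \<otimes> g \<otimes> inv c) @ c # r"
      using s_front by (rule fact_equiv_append_left)
    also have "replicate n (c \<otimes> g \<otimes> inv c) @ c # r \<approx>\<^sub>C replicate n g @ c # r"
      using fact_equiv_replicate_conj g c pow by blast
    also have "replicate n g @ c # r \<approx>\<^sub>C replicate n g @ s"
      using fact_equiv_append_left[OF fact_equiv_sym[OF s_front]] .
    finally show ?thesis .
  qed
  then show ?thesis
    using c by (simp add: block_stabilizer_def)
qed

lemma fact_equiv_replicate_conj_generating: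
  assumes "set s \<subseteq> C" "generate G (set s) = carrier G"
    and "\<And>g. g \<in> C \<Longrightarrow> g [^] n = \<one>"
    and "a \<in> C" "h \<in> carrier G"
  shows "replicate n (h \<otimes> a \<otimes> inv h) @ s \<approx>\<^sub>C replicate n a @ s"
proof -
  have "set s \<subseteq> block_stabilizer n s"
    using letter_in_block_stabilizer assms(1,3) by blast
  then have "carrier G \<subseteq> block_stabilizer n s"
    using generate_subgroup_incl[OF _ subgroup_block_stabilizer] assms(2) by metis
  then show ?thesis
    using assms(4,5) by (auto simp: block_stabilizer_def)
qed

lemma fact_equiv_gather:
  assumes "set w \<subseteq> C" "b \<in> C"
  shows "\<exists>w'. w \<approx>\<^sub>C replicate (count_list w b) b @ w' \<and> set w' \<subseteq> C"
  using assms(1)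
proof (induction w rule: rev_induct)
  case (snoc x w)
  then obtain w' where w': "w \<approx>\<^sub>C replicate (count_list w b) b @ w'" "set w' \<subseteq> C"
    by auto
  let ?m = "count_list w b"
  have append_x: "w @ [x] \<approx>\<^sub>C replicate ?m b @ w' @ [x]"
    using fact_equiv_append_right[OF w'(1)] by simp
  show ?case
  proof (cases "x = b")
    case True
    let ?w'' = "map (\<lambda>y. inv b \<otimes> y \<otimes> b) w'"
    have "w @ [x] \<approx>\<^sub>C replicate ?m b @ w' @ [b]"
      using append_x True by simp
    also have "replicate ?m b @ w' @ [b] \<approx>\<^sub>C replicate ?m b @ b # ?w''"
      using fact_equiv_append_left[OF fact_equiv_move_left[OF w'(2) assms(2)]] .
    also have "replicate ?m b @ b # ?w'' = replicate (count_list (w @ [x]) b) b @ ?w''"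
      using True by (simp add: replicate_append_same[symmetric])
    finally have "w @ [x] \<approx>\<^sub>C replicate (count_list (w @ [x]) b) b @ ?w''" .
    moreover have "set ?w'' \<subseteq> C"
      using w'(2) assms(2) conj_closed_inv by auto
    ultimately show ?thesis by blast
  next
    case False
    then show ?thesis
      using append_x w'(2) snoc.prems by (intro exI[of _ "w' @ [x]"]) auto
  qed
qed (intro exI[of _ "[]"], simp)

lemma words_G_one_fact_equiv:
  assumes "s \<in> words_G_one G C k" "s \<approx>\<^sub>C t"
  shows "t \<in> words_G_one G C k"
  using assms fact_equiv_invariants[OF assms(2)] by (simp add: words_G_one_def)

lemma words_G_one_drop_block:
  assumes "replicate n b @ w \<in> words_G_one G C (k + n)" "b \<in> set w" "b [^] n = \<one>"
  shows "w \<in> words_G_one G C k"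
proof -
  have w: "set w \<subseteq> C" and b: "b \<in> carrier G"
    using assms(1,2) C_subset by (auto simp: words_G_one_def)
  then have "word_prod G (replicate n b @ w) = word_prod G w"
    using assms(3) C_subset
    by (simp add: word_prod_append word_prod_replicate word_prod_closed set_replicate_conv_if)
  moreover have "set (replicate n b @ w) = set w"
    using assms(2) by auto
  ultimately show ?thesis
    using assms(1) w by (simp add: words_G_one_def)
qed

lemma words_G_one_reduce:
  assumes "finite C" "0 < n" and pow: "\<And>g. g \<in> C \<Longrightarrow> g [^] n = \<one>"
    and a: "a \<in> carrier G" "C = conj_class G a"
    and "card C * n \<le> k" and s: "s \<in> words_G_one G C (k + n)"
  obtains w where "w \<in> words_G_one G C k" "s \<approx>\<^sub>C replicate n a @ w"
proof -
  have sC: "set s \<subseteq> C" and "length s = k + n"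
    using s by (auto simp: words_G_one_def)
  obtain b where b: "b \<in> C" "n < count_list s b"
  proof (rule count_list_pigeonhole[OF \<open>finite C\<close> sC])
    show "card C * n < length s" using assms(2,6) \<open>length s = k + n\<close> by simp
  qed
  obtain w' where w': "s \<approx>\<^sub>C replicate (count_list s b) b @ w'" "set w' \<subseteq> C"
    using fact_equiv_gather[OF sC b(1)] by blast
  define w where "w = replicate (count_list s b - n) b @ w'"
  have "replicate (count_list s b) b @ w' = replicate n b @ w"
    using b(2) replicate_add[of n "count_list s b - n" b] by (simp add: w_def)
  with w' have s_b: "s \<approx>\<^sub>C replicate n b @ w" by simp
  have wC: "set w \<subseteq> C" and "b \<in> set w"
    using w'(2) b by (auto simp: w_def)
  have w: "w \<in> words_G_one G C k"
    using words_G_one_drop_block[OF words_G_one_fact_equiv[OF s s_b] \<open>b \<in> set w\<close>] pow b(1) .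
  obtain h where h: "h \<in> carrier G" "b = h \<otimes> a \<otimes> inv h"
    using conj_class_memberE[of b G a] b(1) a(2) by blast
  have "generate G (set w) = carrier G"
    using w by (simp add: words_G_one_def)
  moreover have "a \<in> C"
    using conj_class_self[OF a(1)] a(2) by simp
  ultimately have "replicate n b @ w \<approx>\<^sub>C replicate n a @ w"
    using fact_equiv_replicate_conj_generating[OF wC _ pow _ h(1)] h(2) by simp
  with s_b have "s \<approx>\<^sub>C replicate n a @ w"
    by (rule fact_equiv_trans)
  with w show ?thesis using that by blast
qed

lemma h_count_add_le:
  assumes "finite C" "0 < n" "\<And>g. g \<in> C \<Longrightarrow> g [^] n = \<one>"
    and "a \<in> carrier G" "C = conj_class G a" "card C * n \<le> k"
  shows "h_count G C (k + n) \<le> h_count G C k"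
  unfolding h_count_def
proof (rule card_quotient_le_if_onto[OF equiv_fact_equiv])
  show "finite (words_G_one G C k)"
    using finite_lists_length_eq[OF assms(1), of k]
    by (rule finite_subset[rotated]) (auto simp: words_G_one_def)
  show "replicate n a @ x \<approx>\<^sub>C replicate n a @ y" if "x \<approx>\<^sub>C y" for x y
    using that by (rule fact_equiv_append_left)
  show "\<exists>x\<in>words_G_one G C k. y \<approx>\<^sub>C replicate n a @ x" if "y \<in> words_G_one G C (k + n)" for y
    using words_G_one_reduce[OF assms that] by blast
qed

end

lemma (in group) conj_invariant_subset_conj_class:
  assumes "c \<in> carrier G"
  shows "conj_invariant_subset G (conj_class G c)"
proof (intro conj_invariant_subset.intro conj_invariant_subset_axioms.intro)
  show "group G" by (rule is_group)
  show "conj_class G c \<subseteq> carrier G"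
    using assms by (auto simp: conj_class_def)
  fix g x assume g: "g \<in> carrier G" and "x \<in> conj_class G c"
  from \<open>x \<in> conj_class G c\<close> obtain h where h: "h \<in> carrier G" "x = h \<otimes> c \<otimes> inv h"
    by (rule conj_class_memberE)
  then have "g \<otimes> x \<otimes> inv g = (g \<otimes> h) \<otimes> c \<otimes> inv (g \<otimes> h)"
    using g assms by (simp add: m_assoc inv_mult_group)
  then show "g \<otimes> x \<otimes> inv g \<in> conj_class G c"
    using g h by (auto simp: conj_class_def)
qed

lemma antimono_nat_eventually_const:
  fixes g :: "nat \<Rightarrow> nat"
  assumes "antimono g"
  obtains J where "\<And>j. J \<le> j \<Longrightarrow> g j = g J"
proof -
  obtain J where least: "\<And>j. g J \<le> g j" using ex_has_least_nat[of "\<lambda>_. True" 0 g] by blast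
  have "g j = g J" if "J \<le> j" for j
    using antimonoD[OF assms that] least[of j] by simp
  then show ?thesis using that by blast
qed

text \<open>The window sums \<open>\<Sum>i\<in>{k..<k+d}. f i\<close> decrease, hence stabilise, and they
  stabilise exactly when \<open>f (k + d) = f k\<close>.\<close>
lemma eventually_periodic_if_eventually_le:
  fixes f :: "nat \<Rightarrow> nat"
  assumes "0 < d" and le: "\<And>k. N \<le> k \<Longrightarrow> f (k + d) \<le> f k"
  obtains M where "\<And>k. M \<le> k \<Longrightarrow> f (k + d) = f k"
proof -
  define S where "S k = sum f {k..<k + d}" for k
  have S_Suc: "S (Suc k) + f k = S k + f (k + d)" for k
  proof -
    have "S k + f (k + d) = sum f {k..<Suc (k + d)}"
      unfolding S_def by (simp add: add.commute)
    also have "\<dots> = f k + S (Suc k)"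
      unfolding S_def using assms(1) by (simp add: sum.atLeast_Suc_lessThan)
    finally show ?thesis by simp
  qed
  have "S (N + Suc j) \<le> S (N + j)" for j
    using S_Suc[of "N + j"] le[of "N + j"] by simp
  then have "antimono (\<lambda>j. S (N + j))"
    by (simp add: antimono_iff_le_Suc)
  then obtain J where J: "\<And>j. J \<le> j \<Longrightarrow> S (N + j) = S (N + J)"
    using antimono_nat_eventually_const by blast
  have "f (k + d) = f k" if "N + J \<le> k" for k
  proof -
    have "S k = S (N + J)" "S (Suc k) = S (N + J)"
      using J[of "k - N"] J[of "Suc k - N"] that by simp_all
    then show ?thesis using S_Suc[of k] by simp
  qed
  then show ?thesis using that by blast
qed

lemma rational_fps_eventually_periodic:
  fixes f :: "nat \<Rightarrow> 'a::field"
  assumes "0 < d" and periodic: "\<And>k. M \<le> k \<Longrightarrow> f (k + d) = f k"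
  shows "rational_fps (Abs_fps f)"
proof -
  define q :: "'a poly" where "q = 1 - monom 1 d"
  define P where "P = fps_of_poly q * Abs_fps f"
  have P_nth: "fps_nth P k = f k - (if k < d then 0 else f (k - d))" for k
    unfolding P_def q_def
    by (simp add: fps_of_poly_diff fps_of_poly_monom' algebra_simps fps_X_power_mult_right_nth)
  have "fps_nth P k = 0" if "M + d \<le> k" for k
    using P_nth[of k] periodic[of "k - d"] that by simp
  then have "fps_of_poly (truncate_fps (M + d) P) = P"
    by (intro fps_ext) (simp add: not_less)
  moreover have "coeff q 0 = 1"
    using assms(1) by (simp add: q_def coeff_monom)
  then have "q \<noteq> 0" by auto
  ultimately show ?thesis
    unfolding rational_fps_def P_def by metis
qed

theorem proposition4p4:
  fixes G :: "('a, 'b) monoid_scheme" and C :: "'a set"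
  assumes "group G" and "finite (carrier G)"
    and "\<exists>c \<in> carrier G. C = conj_class G c"
    and "C \<noteq> {\<one>\<^bsub>G\<^esub>}"
    and "generate G C = carrier G"
  shows "rational_fps (Abs_fps (\<lambda>k. of_nat (h_count G C k)) :: rat fps)"
proof -
  interpret group G by fact
  obtain c where c: "c \<in> carrier G" "C = conj_class G c"
    using assms(3) by blast
  interpret conj_invariant_subset G C
    using conj_invariant_subset_conj_class[OF c(1)] c(2) by simp
  have "finite C"
    using C_subset assms(2) by (rule finite_subset)
  have order: "0 < Coset.order G"
    using assms(2) by (simp add: order_gt_0_iff_finite)
  have "h_count G C (k + Coset.order G) \<le> h_count G C k" if "card C * Coset.order G \<le> k" for k
    using h_count_add_le[OF \<open>finite C\<close> order pow_order_eq_1 c that] by simp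
  then obtain M where "\<And>k. M \<le> k \<Longrightarrow> h_count G C (k + Coset.order G) = h_count G C k"
    using eventually_periodic_if_eventually_le[OF order] by blast
  then show ?thesis
    by (intro rational_fps_eventually_periodic[OF order]) simp
qed

end
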